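(* For every $\epsilon,n$, every layered graph $G$ over $\Sigma_{in}$ of depth $n$, every $\epsilon$-sensitive $(G,\Sigma_{out})$-code $\mathsf{C}$, and all $x\in\Sigma_{in}^n$ and $w\in\Sigma_{out}^n$, letting $J$ be the set of indices $i$ with $\mathsf{C}(x)[i]=w[i]$, it holds that $\mathsf{CDec}(w[1:i])=v(x[1:i])$ for all but at most $2\epsilon n$ values of $i\in J$.
   Context: A layered graph over alphabet $\Sigma$ of depth $n$ is a directed graph whose vertices are partitioned into layers $0,\dots,n$, with exactly one vertex (the root) in layer $0$, and each vertex in layer $i<n$ has exactly $|\Sigma|$ out-edges to layer $i+1$ labeled by the distinct elements of $\Sigma$ (endpoints need not be distinct). A string $p\in\Sigma_{in}^i$ determines a unique root path ending at vertex $v(p)$ in layer $i$. A $(G,\Sigma_{out})$-code $\mathsf{C}$ assigns an element of $\Sigma_{out}$ to each edge; $\mathsf{C}(p)$ is the label string along $p$. Suffix distance: $\Delta_{sfx}(a,b)=\max_{0\le i\le m-1}\frac{\Delta(a[i+1:m],b[i+1:m])}{m-i}$ for $a,b\in\Sigma^m$, $\Delta$ Hamming distance. $L_i(\mathsf{C},w,\epsilon)=\{v(p):p\in\Sigma_{in}^i,\ \Delta_{sfx}(\mathsf{C}(p),w[1:i])<1-\epsilon\}$, $L(\mathsf{C},w,\epsilon)=\bigcup_{i=1}^nL_i(\mathsf{C},w,\epsilon)$. For $S\subseteq L(\mathsf{C},w,\epsilon)$, a prefix tree of $S$ is a union of paths $p(v)$ ($v\in S$) from the root to $v$, each with $\Delta_{sfx}(\mathsf{C}(p(v)),w[1:|p(v)|])<1-\epsilon$,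 that forms a rooted tree; $\mathcal{PT}(\mathsf{C},w,\epsilon)$ is the set of all such prefix trees of subsets of $L(\mathsf{C},w,\epsilon)$. $agr(\mathsf{C}(H),w(H))$ is the number of edges of $H$ whose $\mathsf{C}$-label equals $w[i]$, $i$ the edge's depth. $\mathsf{C}$ is $\epsilon$-sensitive if for all $w\in\Sigma_{out}^n$ and all $PT\in\mathcal{PT}(\mathsf{C},w,\epsilon)$, $agr(\mathsf{C}(PT),w(PT))\le(1+\epsilon)n$. The decoder $\mathsf{CDec}$, on input $w'\in\Sigma_{out}^i$, outputs the vertex $v$ such that there exists $p\in\Sigma_{in}^i$ with $v(p)=v$ and $\Delta_{sfx}(\mathsf{C}(p),w')<1-\epsilon$ if exactly one such vertex exists, and outputs $\perp$ otherwise. *)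

theory Defs
  imports Complex_Main
begin

text \<open>A layered graph of depth n over the input alphabet (the finite type 'a):
  vertex set V, layer function, r0, and transition function delta; the out-edge of
  vertex v labelled a is identified with the pair (v, a), and its endpoint is delta v a.\<close>

definition layered_graph ::
  "nat \<Rightarrow> 'v set \<Rightarrow> ('v \<Rightarrow> nat) \<Rightarrow> 'v \<Rightarrow> ('v \<Rightarrow> 'a \<Rightarrow> 'v) \<Rightarrow> bool" where
  "layered_graph n V layer r0 delta \<longleftrightarrow>
     r0 \<in> V \<and> layer r0 = 0 \<and>
     (\<forall>v\<in>V. layer v \<le> n) \<and>
     (\<forall>v\<in>V. layer v = 0 \<longrightarrow> v = r0) \<and>
     (\<forall>v\<in>V. layer v < n \<longrightarrow> (\<forall>a. delta v a \<in> V \<and> layer (delta v a) = Suc (layer v)))"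

definition vtx :: "'v \<Rightarrow> ('v \<Rightarrow> 'a \<Rightarrow> 'v) \<Rightarrow> 'a list \<Rightarrow> 'v" where
  "vtx r0 delta p = fold (\<lambda>a v. delta v a) p r0"

definition path_edges :: "'v \<Rightarrow> ('v \<Rightarrow> 'a \<Rightarrow> 'v) \<Rightarrow> 'a list \<Rightarrow> ('v \<times> 'a) set" where
  "path_edges r0 delta p = {(vtx r0 delta (take j p), p ! j) | j. j < length p}"

definition code_str :: "'v \<Rightarrow> ('v \<Rightarrow> 'a \<Rightarrow> 'v) \<Rightarrow> ('v \<Rightarrow> 'a \<Rightarrow> 'b) \<Rightarrow> 'a list \<Rightarrow> 'b list" where
  "code_str r0 delta C p = map (\<lambda>j. C (vtx r0 delta (take j p)) (p ! j)) [0..<length p]"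

definition hamming :: "'b list \<Rightarrow> 'b list \<Rightarrow> nat" where
  "hamming a b = card {j. j < length a \<and> a ! j \<noteq> b ! j}"

text \<open>Suffix distance (0-indexed drop i corresponds to a[i+1:m]); for m = 0 it is 0.\<close>
definition sfx_dist :: "'b list \<Rightarrow> 'b list \<Rightarrow> real" where
  "sfx_dist a b = Max (insert 0
     {real (hamming (drop i a) (drop i b)) / real (length a - i) | i. i < length a})"

definition prefix_tree ::
  "nat \<Rightarrow> 'v \<Rightarrow> ('v \<Rightarrow> 'a \<Rightarrow> 'v) \<Rightarrow> ('v \<Rightarrow> 'a \<Rightarrow> 'b) \<Rightarrow> 'b list \<Rightarrow> real \<Rightarrow> ('v \<times> 'a) set \<Rightarrow> bool" where
  "prefix_tree n r0 delta C w eps H \<longleftrightarrow>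
     (\<exists>P. H = (\<Union>p\<in>P. path_edges r0 delta p) \<and>
          (\<forall>p\<in>P. 1 \<le> length p \<and> length p \<le> n \<and>
                 sfx_dist (code_str r0 delta C p) (take (length p) w) < 1 - eps) \<and>
          (\<forall>e1\<in>H. \<forall>e2\<in>H. delta (fst e1) (snd e1) = delta (fst e2) (snd e2) \<longrightarrow> e1 = e2))"

text \<open>agr(C(H), w(H)): number of edges whose label equals w at the edge's depth
  (the edge out of a vertex in layer l has depth l+1, i.e. w[l+1] = w ! l).\<close>
definition agr :: "('v \<Rightarrow> nat) \<Rightarrow> ('v \<Rightarrow> 'a \<Rightarrow> 'b) \<Rightarrow> 'b list \<Rightarrow> ('v \<times> 'a) set \<Rightarrow> nat" where
  "agr layer C w H = card {e \<in> H. C (fst e) (snd e) = w ! layer (fst e)}"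

definition sensitive ::
  "real \<Rightarrow> nat \<Rightarrow> ('v \<Rightarrow> nat) \<Rightarrow> 'v \<Rightarrow> ('v \<Rightarrow> 'a \<Rightarrow> 'v) \<Rightarrow> ('v \<Rightarrow> 'a \<Rightarrow> 'b) \<Rightarrow> bool" where
  "sensitive eps n layer r0 delta C \<longleftrightarrow>
     (\<forall>w H. length w = n \<longrightarrow> prefix_tree n r0 delta C w eps H \<longrightarrow>
        real (agr layer C w H) \<le> (1 + eps) * real n)"

text \<open>The decoder CDec: None plays the role of \<bottom>.\<close>
definition CDec ::
  "real \<Rightarrow> 'v \<Rightarrow> ('v \<Rightarrow> 'a \<Rightarrow> 'v) \<Rightarrow> ('v \<Rightarrow> 'a \<Rightarrow> 'b) \<Rightarrow> 'b list \<Rightarrow> 'v option" where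
  "CDec eps r0 delta C w' =
     (let S = {vtx r0 delta p | p. length p = length w' \<and>
                 sfx_dist (code_str r0 delta C p) w' < 1 - eps}
      in if (\<exists>!v. v \<in> S) then Some (THE v. v \<in> S) else None)"

end

theory Submission
  imports Defs
begin

text \<open>Let i be an agreeing position at which the decoder fails. Either the path of x[1:i] is not
  close to w[1:i], i.e. some suffix of it agrees with w on at most an eps fraction of its
  positions, or a second vertex of layer i is reached by a close path. Peeling off such sparse
  suffixes shows that there are at most eps n positions of the first kind. For the second kind,
  the potential min over k of (agreements on [k, i) - eps (i - k)) is positive exactly on close
  paths, and its next value depends only on its current one. Hence best paths to all vertices can
  be chosen by dynamic programming so that they form a tree. Adding a longest close path padded
  to depth n, and patching w along the padding, yields a prefix tree with an agreeing edge at
  every depth and two at every depth of the second kind, so eps-sensitivity leaves room for at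
  most eps n such depths.\<close>

section \<open>Agreement densities\<close>

definition agree_count :: "(nat \<Rightarrow> bool) \<Rightarrow> nat \<Rightarrow> nat \<Rightarrow> nat" where
  "agree_count ag k i = card {l \<in> {k..<i}. ag l}"

definition suffix_dense :: "real \<Rightarrow> (nat \<Rightarrow> bool) \<Rightarrow> nat \<Rightarrow> bool" where
  "suffix_dense eps ag i \<longleftrightarrow> (\<forall>k<i. eps * real (i - k) < real (agree_count ag k i))"

lemma agree_count_empty [simp]: "agree_count ag i i = 0"
  by (simp add: agree_count_def)

lemma agree_count_split:
  assumes "k \<le> m" "m \<le> i"
  shows "agree_count ag k i = agree_count ag k m + agree_count ag m i"
proof -
  have "{l \<in> {k..<i}. ag l} = {l \<in> {k..<m}. ag l} \<union> {l \<in> {m..<i}. ag l}"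
    using assms by auto
  moreover have "card ({l \<in> {k..<m}. ag l} \<union> {l \<in> {m..<i}. ag l})
      = card {l \<in> {k..<m}. ag l} + card {l \<in> {m..<i}. ag l}"
    by (rule card_Un_disjoint) auto
  ultimately show ?thesis
    unfolding agree_count_def by simp
qed

lemma agree_count_Suc:
  assumes "k \<le> i"
  shows "agree_count ag k (Suc i) = agree_count ag k i + of_bool (ag i)"
proof (cases "ag i")
  case True
  then have "{l \<in> {k..<Suc i}. ag l} = insert i {l \<in> {k..<i}. ag l}"
    using assms by auto
  then show ?thesis
    using True by (simp add: agree_count_def)
next
  case False
  then have "{l \<in> {k..<Suc i}. ag l} = {l \<in> {k..<i}. ag l}"
    by (auto simp: less_Suc_eq)
  then show ?thesis
    using False by (simp add: agree_count_def)
qed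

lemma agree_count_mono:
  "(\<And>l. k \<le> l \<Longrightarrow> l < i \<Longrightarrow> ag l \<Longrightarrow> ag' l) \<Longrightarrow> agree_count ag k i \<le> agree_count ag' k i"
  unfolding agree_count_def by (rule card_mono) auto

lemma suffix_dense_mono:
  assumes "\<And>l. l < i \<Longrightarrow> ag l \<Longrightarrow> ag' l" and "suffix_dense eps ag i"
  shows "suffix_dense eps ag' i"
  unfolding suffix_dense_def
proof (intro allI impI)
  fix k assume "k < i"
  then have "eps * real (i - k) < real (agree_count ag k i)"
    using assms(2) unfolding suffix_dense_def by blast
  also have "\<dots> \<le> real (agree_count ag' k i)"
    using assms(1) by (simp add: agree_count_mono)
  finally show "eps * real (i - k) < real (agree_count ag' k i)" .
qed

lemma suffix_dense_cong:
  "(\<And>l. l < i \<Longrightarrow> ag l = ag' l) \<Longrightarrow> suffix_dense eps ag i = suffix_dense eps ag' i"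
  using suffix_dense_mono[where ag = ag and ag' = ag'] suffix_dense_mono[where ag = ag' and ag' = ag]
  by blast

lemma suffix_dense_last:
  assumes "0 \<le> eps" and "suffix_dense eps ag (Suc j)"
  shows "ag j"
proof -
  have "eps < real (agree_count ag j (Suc j))"
    using assms(2) unfolding suffix_dense_def by force
  with assms(1) show ?thesis
    by (cases "ag j") (simp_all add: agree_count_Suc)
qed

lemma suffix_dense_extend:
  assumes "eps < 1" "m \<le> i" "suffix_dense eps ag m" and agree: "\<And>l. m \<le> l \<Longrightarrow> l < i \<Longrightarrow> ag l"
  shows "suffix_dense eps ag i"
  unfolding suffix_dense_def
proof (intro allI impI)
  fix k assume "k < i"
  have full: "agree_count ag k' i = i - k'" if "m \<le> k'" for k'
  proof -
    have "{l \<in> {k'..<i}. ag l} = {k'..<i}"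
      using agree that by auto
    then show ?thesis
      by (simp add: agree_count_def)
  qed
  show "eps * real (i - k) < real (agree_count ag k i)"
  proof (cases "m \<le> k")
    case True
    then show ?thesis
      using full \<open>k < i\<close> \<open>eps < 1\<close> by simp
  next
    case False
    have "eps * real (m - k) < real (agree_count ag k m)"
      using assms(3) False unfolding suffix_dense_def by simp
    moreover have "eps * real (i - m) \<le> real (i - m)"
      using \<open>eps < 1\<close> mult_right_mono[of eps 1 "real (i - m)"] by simp
    ultimately show ?thesis
      using False assms(2) agree_count_split[of k m i ag] full[of m]
      by (simp add: of_nat_diff algebra_simps)
  qed
qed

text \<open>For i > 0 this is the minimum over k < i of agree_count ag k i - eps (i - k)
  (suffix_margin_le, suffix_margin_attained); the recursive form is what lets best paths be
  chosen by dynamic programming.\<close>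

primrec suffix_margin :: "real \<Rightarrow> (nat \<Rightarrow> bool) \<Rightarrow> nat \<Rightarrow> real" where
  "suffix_margin eps ag 0 = 0"
| "suffix_margin eps ag (Suc i) = min 0 (suffix_margin eps ag i) + of_bool (ag i) - eps"

lemma suffix_margin_le:
  "k < i \<Longrightarrow> suffix_margin eps ag i \<le> real (agree_count ag k i) - eps * real (i - k)"
proof (induction i)
  case (Suc i)
  show ?case
  proof (cases "k = i")
    case False
    then have "suffix_margin eps ag i \<le> real (agree_count ag k i) - eps * real (i - k)"
      using Suc by simp
    then show ?thesis
      using Suc.prems False by (simp add: agree_count_Suc Suc_diff_le algebra_simps)
  qed (simp add: agree_count_Suc)
qed simp

lemma suffix_margin_attained:
  "0 < i \<Longrightarrow> \<exists>k<i. suffix_margin eps ag i = real (agree_count ag k i) - eps * real (i - k)"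
proof (induction i)
  case (Suc i)
  show ?case
  proof (cases "i = 0 \<or> 0 \<le> suffix_margin eps ag i")
    case True
    then show ?thesis
      by (intro exI[of _ i]) (auto simp: agree_count_Suc)
  next
    case False
    then obtain k where "k < i" "suffix_margin eps ag i = real (agree_count ag k i) - eps * real (i - k)"
      using Suc by auto
    with False show ?thesis
      by (intro exI[of _ k]) (simp add: agree_count_Suc Suc_diff_le algebra_simps)
  qed
qed simp

lemma suffix_dense_iff_margin_pos:
  "0 < i \<Longrightarrow> suffix_dense eps ag i \<longleftrightarrow> 0 < suffix_margin eps ag i"
  unfolding suffix_dense_def
  by (smt (verit) suffix_margin_attained suffix_margin_le)

lemma suffix_margin_cong:
  "(\<And>l. l < i \<Longrightarrow> ag l = ag' l) \<Longrightarrow> suffix_margin eps ag i = suffix_margin eps ag' i"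
  by (induction i) auto

lemma card_agreeing_not_dense_split:
  "card {i \<in> {1..n}. ag (i - 1) \<and> \<not> suffix_dense eps ag i}
     \<le> card {i \<in> {1..k}. ag (i - 1) \<and> \<not> suffix_dense eps ag i} + agree_count ag k n"
proof -
  let ?F = "\<lambda>m. {i \<in> {1..m}. ag (i - 1) \<and> \<not> suffix_dense eps ag i}"
  have "?F n \<subseteq> ?F k \<union> Suc ` {l \<in> {k..<n}. ag l}"
  proof
    fix i assume i: "i \<in> ?F n"
    show "i \<in> ?F k \<union> Suc ` {l \<in> {k..<n}. ag l}"
    proof (cases "i \<le> k")
      case False
      then have "i - 1 \<in> {l \<in> {k..<n}. ag l}" "i = Suc (i - 1)"
        using i by auto
      then show ?thesis
        by blast
    qed (use i in auto)
  qed
  then have "card (?F n) \<le> card (?F k \<union> Suc ` {l \<in> {k..<n}. ag l})"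
    by (intro card_mono) auto
  also have "\<dots> \<le> card (?F k) + card (Suc ` {l \<in> {k..<n}. ag l})"
    by (rule card_Un_le)
  also have "card (Suc ` {l \<in> {k..<n}. ag l}) = agree_count ag k n"
    by (simp add: agree_count_def card_image)
  finally show ?thesis .
qed

text \<open>A prefix [0, n) that is not dense has a suffix [k, n) with at most eps (n - k) agreements;
  recurse on [0, k).\<close>

lemma card_agreeing_not_dense_le:
  assumes "0 \<le> eps"
  shows "real (card {i \<in> {1..n}. ag (i - 1) \<and> \<not> suffix_dense eps ag i}) \<le> eps * real n"
proof (induction n rule: less_induct)
  case (less n)
  show ?case
  proof (cases "suffix_dense eps ag n")
    case True
    show ?thesis
    proof (cases n)
      case (Suc m)
      have "{i \<in> {1..n}. ag (i - 1) \<and> \<not> suffix_dense eps ag i}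
          \<subseteq> {i \<in> {1..m}. ag (i - 1) \<and> \<not> suffix_dense eps ag i}"
        using True Suc by (auto simp: le_Suc_eq)
      then have "card {i \<in> {1..n}. ag (i - 1) \<and> \<not> suffix_dense eps ag i}
          \<le> card {i \<in> {1..m}. ag (i - 1) \<and> \<not> suffix_dense eps ag i}"
        by (intro card_mono) auto
      moreover have "eps * real m \<le> eps * real n"
        using assms Suc by (simp add: mult_left_mono)
      ultimately show ?thesis
        using less[of m] Suc by simp
    qed simp
  next
    case False
    then obtain k where k: "k < n" "real (agree_count ag k n) \<le> eps * real (n - k)"
      unfolding suffix_dense_def by auto
    have "eps * real k + eps * real (n - k) = eps * real n"
      using k(1) by (simp add: of_nat_diff algebra_simps)
    then show ?thesis
      using card_agreeing_not_dense_split[of n ag eps k] less[OF k(1)] k(2) by linarith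
  qed
qed

section \<open>Suffix distance\<close>

lemma hamming_drop_add_agree_count:
  assumes "length a = length b" "k \<le> length a"
  shows "hamming (drop k a) (drop k b) + agree_count (\<lambda>l. a ! l = b ! l) k (length a) = length a - k"
proof -
  have "{l \<in> {k..<length a}. a ! l \<noteq> b ! l}
      = (+) k ` {j. j < length (drop k a) \<and> drop k a ! j \<noteq> drop k b ! j}"
  proof (intro set_eqI iffI)
    fix l assume "l \<in> {l \<in> {k..<length a}. a ! l \<noteq> b ! l}"
    then show "l \<in> (+) k ` {j. j < length (drop k a) \<and> drop k a ! j \<noteq> drop k b ! j}"
      using assms by (intro image_eqI[of _ _ "l - k"]) auto
  qed (use assms in auto)
  then have "hamming (drop k a) (drop k b) = card {l \<in> {k..<length a}. a ! l \<noteq> b ! l}"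
    by (simp add: hamming_def card_image)
  moreover have "card ({l \<in> {k..<length a}. a ! l \<noteq> b ! l} \<union> {l \<in> {k..<length a}. a ! l = b ! l})
      = card {l \<in> {k..<length a}. a ! l \<noteq> b ! l} + card {l \<in> {k..<length a}. a ! l = b ! l}"
    by (rule card_Un_disjoint) auto
  moreover have "{l \<in> {k..<length a}. a ! l \<noteq> b ! l} \<union> {l \<in> {k..<length a}. a ! l = b ! l} = {k..<length a}"
    by auto
  ultimately show ?thesis
    by (simp add: agree_count_def)
qed

lemma sfx_dist_less_iff:
  assumes "length a = length b" "eps < 1"
  shows "sfx_dist a b < 1 - eps \<longleftrightarrow> suffix_dense eps (\<lambda>l. a ! l = b ! l) (length a)"
proof -
  define r where "r i = real (hamming (drop i a) (drop i b)) / real (length a - i)" for i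
  have "sfx_dist a b = Max (insert 0 (r ` {..<length a}))"
    unfolding sfx_dist_def r_def by (simp add: setcompr_eq_image lessThan_def)
  then have "sfx_dist a b < 1 - eps \<longleftrightarrow> (\<forall>i<length a. r i < 1 - eps)"
    using assms(2) by auto
  moreover have "r i < 1 - eps \<longleftrightarrow> eps * real (length a - i) < real (agree_count (\<lambda>l. a ! l = b ! l) i (length a))"
    if "i < length a" for i
  proof -
    have pos: "0 < real (length a - i)"
      using that by simp
    have "r i < 1 - eps \<longleftrightarrow> real (hamming (drop i a) (drop i b)) < (1 - eps) * real (length a - i)"
      unfolding r_def using pos by (rule pos_divide_less_eq)
    moreover have "real (hamming (drop i a) (drop i b))
        = real (length a - i) - real (agree_count (\<lambda>l. a ! l = b ! l) i (length a))"
      using hamming_drop_add_agree_count[OF assms(1), of i] that by linarith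
    ultimately show ?thesis
      by (simp add: algebra_simps)
  qed
  ultimately show ?thesis
    unfolding suffix_dense_def by simp
qed

section \<open>Paths and best paths\<close>

lemma arg_max_if_finite:
  fixes f :: "'a \<Rightarrow> 'b::linorder"
  assumes "finite {x. P x}" "P x"
  shows "P (arg_max f P) \<and> (\<forall>y. P y \<longrightarrow> f y \<le> f (arg_max f P))"
proof -
  have "Max (f ` {x. P x}) \<in> f ` {x. P x}"
    using assms by (intro Max_in) auto
  then obtain m where m: "P m" "f m = Max (f ` {x. P x})"
    by auto
  have "f y \<le> f m" if "P y" for y
    using assms that m(2) by (auto intro: Max_ge)
  then have "is_arg_max f P m"
    using m(1) by (simp add: is_arg_max_linorder)
  then have "is_arg_max f P (arg_max f P)"
    unfolding arg_max_def by (rule someI)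
  then show ?thesis
    by (simp add: is_arg_max_linorder)
qed

lemma vtx_snoc [simp]: "vtx r0 delta (p @ [a]) = delta (vtx r0 delta p) a"
  by (simp add: vtx_def)

lemma vtx_take_Suc:
  "j < length p \<Longrightarrow> vtx r0 delta (take (Suc j) p) = delta (vtx r0 delta (take j p)) (p ! j)"
  by (simp add: take_Suc_conv_app_nth)

lemma length_code_str [simp]: "length (code_str r0 delta C p) = length p"
  by (simp add: code_str_def)

lemma nth_code_str:
  "j < length p \<Longrightarrow> code_str r0 delta C p ! j = C (vtx r0 delta (take j p)) (p ! j)"
  by (simp add: code_str_def)

lemma finite_path_edges: "finite (path_edges r0 delta p)"
proof -
  have "path_edges r0 delta p = (\<lambda>j. (vtx r0 delta (take j p), p ! j)) ` {..<length p}"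
    unfolding path_edges_def by auto
  then show ?thesis
    by simp
qed

locale path_graph =
  fixes r0 :: 'v and delta :: "'v \<Rightarrow> 'a::finite \<Rightarrow> 'v"
begin

abbreviation vt :: "'a list \<Rightarrow> 'v" where
  "vt p \<equiv> vtx r0 delta p"

text \<open>Dynamic programming: the path of length i + 1 is chosen among the one-step extensions of
  the chosen paths of length i. So the chosen paths are prefix-closed, and they are optimal for
  scores compatible with extension.\<close>

primrec best_path :: "('a list \<Rightarrow> real) \<Rightarrow> nat \<Rightarrow> 'v \<Rightarrow> 'a list" where
  "best_path f 0 t = []"
| "best_path f (Suc i) t =
     (ARG_MAX f q. \<exists>p a. length p = i \<and> delta (vt p) a = t \<and> q = best_path f i (vt p) @ [a])"

declare best_path.simps(2) [simp del]

lemma best_path_Suc: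
  assumes "length p' = i" "delta (vt p') b = t"
  shows "\<exists>p0 a. length p0 = i \<and> delta (vt p0) a = t \<and> best_path f (Suc i) t = best_path f i (vt p0) @ [a]"
    and "f (best_path f i (vt p') @ [b]) \<le> f (best_path f (Suc i) t)"
proof -
  define Q where "Q = (\<lambda>q. \<exists>p a. length p = i \<and> delta (vt p) a = t \<and> q = best_path f i (vt p) @ [a])"
  have "{q. Q q} \<subseteq> (\<lambda>(p, a). best_path f i (vt p) @ [a]) ` ({p. length p = i} \<times> UNIV)"
    unfolding Q_def by auto
  moreover have "finite {p :: 'a list. length p = i}"
    using finite_lists_length_eq[of "UNIV :: 'a set" i] by simp
  ultimately have "finite {q. Q q}"
    by (rule finite_subset[OF _ finite_imageI[OF finite_cartesian_product]]) simp_all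
  moreover have "Q (best_path f i (vt p') @ [b])"
    unfolding Q_def using assms by blast
  ultimately have "Q (arg_max f Q) \<and> (\<forall>q. Q q \<longrightarrow> f q \<le> f (arg_max f Q))"
    by (rule arg_max_if_finite)
  moreover have "best_path f (Suc i) t = arg_max f Q"
    by (simp add: Q_def best_path.simps(2))
  ultimately show "\<exists>p0 a. length p0 = i \<and> delta (vt p0) a = t \<and> best_path f (Suc i) t = best_path f i (vt p0) @ [a]"
    and "f (best_path f i (vt p') @ [b]) \<le> f (best_path f (Suc i) t)"
    using \<open>Q (best_path f i (vt p') @ [b])\<close> unfolding Q_def by auto
qed

lemma best_path_reaches:
  "length (best_path f (length p) (vt p)) = length p \<and> vt (best_path f (length p) (vt p)) = vt p"
proof (induction "length p" arbitrary: p)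
  case (Suc i)
  then obtain p' b where "p = p' @ [b]" "length p' = i"
    by (metis length_Suc_conv_rev)
  then obtain p0 a where "length p0 = i" "delta (vt p0) a = vt p"
    "best_path f (Suc i) (vt p) = best_path f i (vt p0) @ [a]"
    using best_path_Suc(1)[of p' i b "vt p" f] by auto
  with Suc.hyps(1)[of p0] Suc.hyps(2) show ?case
    by simp
qed simp

lemma best_path_optimal:
  assumes mono: "\<And>p p' a. length p = length p' \<Longrightarrow> vt p = vt p' \<Longrightarrow> f p \<le> f p' \<Longrightarrow>
      f (p @ [a]) \<le> f (p' @ [a])"
  shows "f p \<le> f (best_path f (length p) (vt p))"
proof (induction p rule: rev_induct)
  case (snoc a p)
  have "f (p @ [a]) \<le> f (best_path f (length p) (vt p) @ [a])"
    using mono best_path_reaches[of f p] snoc by simp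
  also have "\<dots> \<le> f (best_path f (Suc (length p)) (vt (p @ [a])))"
    by (rule best_path_Suc(2)) simp_all
  finally show ?case
    by simp
qed simp

lemma best_path_take:
  assumes "j \<le> length p"
  shows "take j (best_path f (length p) (vt p)) = best_path f j (vt (take j (best_path f (length p) (vt p))))"
  using assms
proof (induction "length p" arbitrary: p)
  case (Suc i)
  then obtain p' b where "p = p' @ [b]" "length p' = i"
    by (metis length_Suc_conv_rev)
  then obtain p0 a where p0: "length p0 = i" "best_path f (Suc i) (vt p) = best_path f i (vt p0) @ [a]"
    using best_path_Suc(1)[of p' i b "vt p" f] by auto
  show ?case
  proof (cases "j = Suc i")
    case True
    then show ?thesis
      using best_path_reaches[of f p] Suc.hyps(2) by simp
  next
    case False
    then have "j \<le> length p0"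
      using Suc.prems Suc.hyps(2) p0(1) by simp
    then show ?thesis
      using Suc.hyps(1)[OF p0(1)[symmetric]] Suc.hyps(2) p0 best_path_reaches[of f p0] by simp
  qed
qed simp

lemma best_path_extension_prefixes:
  assumes Q: "\<And>s. s \<in> Q \<Longrightarrow> \<exists>p. length p \<le> length pm \<and> s = best_path f (length p) (vt p)"
    and s: "s \<in> insert (best_path f (length pm) (vt pm) @ u) Q"
    and s': "s' \<in> insert (best_path f (length pm) (vt pm) @ u) Q"
    and j: "j \<le> length s" "j \<le> length s'" and head: "vt (take j s) = vt (take j s')"
  shows "take j s = take j s'"
proof -
  let ?z = "best_path f (length pm) (vt pm) @ u"
  have prefix_best: "take j s = best_path f j (vt (take j s))"
    if s_in: "s \<in> insert ?z Q" and j_le: "j \<le> length s" "j \<le> length pm" for s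
  proof (cases "s = ?z")
    case True
    then have "take j s = take j (best_path f (length pm) (vt pm))"
      using j_le(2) best_path_reaches[of f pm] by simp
    then show ?thesis
      using best_path_take[OF j_le(2), of f] by simp
  next
    case False
    then obtain p where "s = best_path f (length p) (vt p)"
      using s_in Q by auto
    then show ?thesis
      using best_path_take[of j p f] best_path_reaches[of f p] j_le(1) by simp
  qed
  show ?thesis
  proof (cases "j \<le> length pm")
    case True
    then show ?thesis
      using prefix_best[OF s j(1)] prefix_best[OF s' j(2)] head by simp
  next
    case False
    have "s = ?z" "s' = ?z"
      using s s' j False Q best_path_reaches by fastforce+
    then show ?thesis
      by simp
  qed
qed

end

section \<open>Codes on layered graphs\<close>

locale layered_paths = path_graph r0 delta
  for r0 :: 'v and delta :: "'v \<Rightarrow> 'a::finite \<Rightarrow> 'v" +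
  fixes n :: nat and V :: "'v set" and layer :: "'v \<Rightarrow> nat"
  assumes layered: "layered_graph n V layer r0 delta"
begin

lemma vt_layer: "length p \<le> n \<Longrightarrow> vt p \<in> V \<and> layer (vt p) = length p"
proof (induction p rule: rev_induct)
  case Nil
  then show ?case
    using layered by (simp add: layered_graph_def vtx_def)
next
  case (snoc a p)
  then show ?case
    using layered by (simp add: layered_graph_def)
qed

lemma path_edges_in_edge_unique:
  assumes len: "\<And>s. s \<in> P \<Longrightarrow> length s \<le> n"
    and prefix: "\<And>s s' j. s \<in> P \<Longrightarrow> s' \<in> P \<Longrightarrow> j \<le> length s \<Longrightarrow> j \<le> length s' \<Longrightarrow>
      vt (take j s) = vt (take j s') \<Longrightarrow> take j s = take j s'"
    and e: "e \<in> (\<Union>s\<in>P. path_edges r0 delta s)" "e' \<in> (\<Union>s\<in>P. path_edges r0 delta s)"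
    and head: "delta (fst e) (snd e) = delta (fst e') (snd e')"
  shows "e = e'"
proof -
  obtain s j where s: "s \<in> P" "j < length s" "e = (vt (take j s), s ! j)"
    using e(1) unfolding path_edges_def by blast
  obtain s' j' where s': "s' \<in> P" "j' < length s'" "e' = (vt (take j' s'), s' ! j')"
    using e(2) unfolding path_edges_def by blast
  have heads: "vt (take (Suc j) s) = vt (take (Suc j') s')"
    using head s s' by (simp add: vtx_take_Suc)
  have "Suc j \<le> n" "Suc j' \<le> n"
    using len[OF s(1)] len[OF s'(1)] s(2) s'(2) by simp_all
  then have "Suc j = Suc j'"
    using vt_layer[of "take (Suc j) s"] vt_layer[of "take (Suc j') s'"] s(2) s'(2) heads by simp
  then have prefixes: "take (Suc j) s = take (Suc j) s'"
    using prefix[OF s(1) s'(1)] s(2) s'(2) heads by simp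
  have "take j s = take j s'" "s ! j = s' ! j"
    using arg_cong[OF prefixes, of "take j"] arg_cong[OF prefixes, of "\<lambda>q. q ! j"] s(2) s'(2)
    by simp_all
  then show ?thesis
    using s(3) s'(3) \<open>Suc j = Suc j'\<close> by simp
qed

end

locale layered_code = layered_paths r0 delta n V layer
  for r0 :: 'v and delta :: "'v \<Rightarrow> 'a::finite \<Rightarrow> 'v" and n V layer +
  fixes C :: "'v \<Rightarrow> 'a \<Rightarrow> 'b" and eps :: real
  assumes eps_pos: "0 < eps" and eps_less_1: "eps < 1"
begin

definition agrees :: "'b list \<Rightarrow> 'a list \<Rightarrow> nat \<Rightarrow> bool" where
  "agrees w q l \<longleftrightarrow> C (vt (take l q)) (q ! l) = w ! l"

definition close :: "'b list \<Rightarrow> 'a list \<Rightarrow> bool" where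
  "close w q \<longleftrightarrow> suffix_dense eps (agrees w q) (length q)"

definition score :: "'b list \<Rightarrow> 'a list \<Rightarrow> real" where
  "score w q = suffix_margin eps (agrees w q) (length q)"

abbreviation canonical :: "'b list \<Rightarrow> 'a list \<Rightarrow> 'a list" where
  "canonical w p \<equiv> best_path (score w) (length p) (vt p)"

lemma agrees_take: "l < j \<Longrightarrow> agrees w (take j q) l = agrees w q l"
  by (simp add: agrees_def)

lemma agrees_append: "l < length p \<Longrightarrow> agrees w (p @ s) l = agrees w p l"
  by (simp add: agrees_def nth_append)

lemma close_take_iff:
  assumes "i \<le> length q"
  shows "close w (take i q) \<longleftrightarrow> suffix_dense eps (agrees w q) i"
  using assms suffix_dense_cong[where ag = "agrees w (take i q)" and ag' = "agrees w q" and i = i]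
  by (simp add: close_def agrees_take)

lemma close_iff_sfx_dist:
  assumes "length q \<le> length w"
  shows "sfx_dist (code_str r0 delta C q) (take (length q) w) < 1 - eps \<longleftrightarrow> close w q"
proof -
  have "sfx_dist (code_str r0 delta C q) (take (length q) w) < 1 - eps \<longleftrightarrow>
      suffix_dense eps (\<lambda>l. code_str r0 delta C q ! l = take (length q) w ! l) (length q)"
    using assms eps_less_1 by (subst sfx_dist_less_iff) simp_all
  also have "\<dots> \<longleftrightarrow> close w q"
    unfolding close_def by (rule suffix_dense_cong) (simp add: nth_code_str agrees_def)
  finally show ?thesis .
qed

lemma score_snoc: "score w (p @ [a]) = min 0 (score w p) + of_bool (C (vt p) a = w ! length p) - eps"
proof -
  have "suffix_margin eps (agrees w (p @ [a])) (length p) = score w p"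
    unfolding score_def by (rule suffix_margin_cong) (simp add: agrees_append)
  then show ?thesis
    by (simp add: score_def agrees_def)
qed

lemma close_iff_score_pos: "q \<noteq> [] \<Longrightarrow> close w q \<longleftrightarrow> 0 < score w q"
  by (simp add: close_def score_def suffix_dense_iff_margin_pos)

lemma close_canonical:
  assumes "p \<noteq> []" "close w p"
  shows "close w (canonical w p)"
proof -
  have "score w p \<le> score w (canonical w p)"
    by (rule best_path_optimal) (simp add: score_snoc)
  moreover have "0 < score w p"
    using assms close_iff_score_pos by blast
  moreover have "canonical w p \<noteq> []"
    using assms(1) best_path_reaches[of "score w" p] by auto
  ultimately show ?thesis
    using close_iff_score_pos by simp
qed

lemma close_agrees_last: "close w q \<Longrightarrow> q \<noteq> [] \<Longrightarrow> agrees w q (length q - 1)"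
  using suffix_dense_last[of eps "agrees w q" "length q - 1"] eps_pos by (simp add: close_def)

definition patch :: "'a list set \<Rightarrow> 'b list \<Rightarrow> 'a list \<Rightarrow> 'b list" where
  "patch P w z = map (\<lambda>j. if \<exists>q\<in>P. j < length q \<and> agrees w q j then w ! j else C (vt (take j z)) (z ! j))
     [0..<length z]"

lemma length_patch [simp]: "length (patch P w z) = length z"
  by (simp add: patch_def)

lemma agrees_patch:
  "q \<in> P \<Longrightarrow> l < length q \<Longrightarrow> l < length z \<Longrightarrow> agrees w q l \<Longrightarrow> agrees (patch P w z) q l"
  unfolding patch_def by (auto simp: agrees_def)

lemma agrees_patch_filler:
  "j < length z \<Longrightarrow> \<not> (\<exists>q\<in>P. j < length q \<and> agrees w q j) \<Longrightarrow> agrees (patch P w z) z j"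
  unfolding agrees_def[of "patch P w z"] by (auto simp: patch_def)

lemma close_patch:
  assumes "q \<in> P" "length q \<le> length z" "close w q"
  shows "close (patch P w z) q"
  using assms suffix_dense_mono[where ag = "agrees w q" and ag' = "agrees (patch P w z) q"]
  by (simp add: close_def agrees_patch)

lemma close_patch_extension:
  assumes "b \<in> P" "close w b" and longest: "\<And>q. q \<in> P \<Longrightarrow> length q \<le> length b"
  shows "close (patch P w (b @ u)) (b @ u)"
proof -
  have "suffix_dense eps (agrees (patch P w (b @ u)) (b @ u)) (length b)"
    using close_patch[OF assms(1) _ assms(2), of "b @ u"] close_take_iff[of "length b" "b @ u"] by simp
  moreover have "agrees (patch P w (b @ u)) (b @ u) l" if "length b \<le> l" "l < length (b @ u)" for l
  proof (rule agrees_patch_filler[OF that(2)])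
    show "\<not> (\<exists>q\<in>P. l < length q \<and> agrees w q l)"
      using longest that(1) by (meson leD order_trans)
  qed
  ultimately show ?thesis
    unfolding close_def by (rule suffix_dense_extend[OF eps_less_1, rotated]) auto
qed

definition agreeing_edges :: "'b list \<Rightarrow> 'a list set \<Rightarrow> nat \<Rightarrow> ('v \<times> 'a) set" where
  "agreeing_edges w P j = {(vt (take j s), s ! j) | s. s \<in> P \<and> j < length s \<and> agrees w s j}"

lemma finite_agreeing_edges: "finite P \<Longrightarrow> finite (agreeing_edges w P j)"
proof -
  assume "finite P"
  moreover have "agreeing_edges w P j \<subseteq> (\<lambda>s. (vt (take j s), s ! j)) ` P"
    unfolding agreeing_edges_def by auto
  ultimately show ?thesis
    by (meson finite_imageI finite_subset)
qed

lemma two_le_card_agreeing_edges: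
  assumes "finite P" "s \<in> P" "s' \<in> P" "length s = Suc j" "length s' = Suc j"
    and "agrees w s j" "agrees w s' j" "vt s \<noteq> vt s'"
  shows "2 \<le> card (agreeing_edges w P j)"
proof -
  let ?e = "(vt (take j s), s ! j)" and ?e' = "(vt (take j s'), s' ! j)"
  have "delta (fst ?e) (snd ?e) = vt s" "delta (fst ?e') (snd ?e') = vt s'"
    using assms(4,5) vtx_take_Suc[of j s r0 delta] vtx_take_Suc[of j s' r0 delta] by simp_all
  then have "?e \<noteq> ?e'"
    using assms(8) by auto
  moreover have "{?e, ?e'} \<subseteq> agreeing_edges w P j"
    using assms unfolding agreeing_edges_def by auto
  then have "card {?e, ?e'} \<le> card (agreeing_edges w P j)"
    by (rule card_mono[OF finite_agreeing_edges[OF assms(1)]])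
  with \<open>?e \<noteq> ?e'\<close> show ?thesis
    by simp
qed

lemma sum_card_agreeing_edges_le_agr:
  assumes "finite P" and len: "\<And>s. s \<in> P \<Longrightarrow> length s \<le> n"
  shows "(\<Sum>j<n. card (agreeing_edges w P j)) \<le> agr layer C w (\<Union>s\<in>P. path_edges r0 delta s)"
proof -
  let ?A = "{e \<in> (\<Union>s\<in>P. path_edges r0 delta s). C (fst e) (snd e) = w ! layer (fst e)}"
  have layer: "agreeing_edges w P j \<subseteq> {e \<in> ?A. layer (fst e) = j}" for j
  proof
    fix e assume "e \<in> agreeing_edges w P j"
    then obtain s where s: "s \<in> P" "j < length s" "agrees w s j" "e = (vt (take j s), s ! j)"
      unfolding agreeing_edges_def by blast
    have "layer (vt (take j s)) = j"
      using vt_layer[of "take j s"] len[OF s(1)] s(2) by simp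
    then show "e \<in> {e \<in> ?A. layer (fst e) = j}"
      using s unfolding path_edges_def agrees_def by auto
  qed
  have "finite (\<Union>s\<in>P. path_edges r0 delta s)"
    using assms(1) by (simp add: finite_path_edges)
  then have "finite ?A"
    by (rule finite_subset[rotated]) auto
  have "(\<Sum>j<n. card (agreeing_edges w P j)) = card (\<Union>j<n. agreeing_edges w P j)"
  proof (rule card_UN_disjoint[symmetric])
    show "\<forall>j\<in>{..<n}. \<forall>j'\<in>{..<n}. j \<noteq> j' \<longrightarrow> agreeing_edges w P j \<inter> agreeing_edges w P j' = {}"
      using layer by blast
  qed (simp_all add: finite_agreeing_edges[OF assms(1)])
  also have "\<dots> \<le> card ?A"
    using layer \<open>finite ?A\<close> by (intro card_mono) auto
  finally show ?thesis
    unfolding agr_def .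
qed

lemma prefix_tree_of_close_paths:
  assumes "length w = n" and paths: "\<And>s. s \<in> P \<Longrightarrow> s \<noteq> [] \<and> length s \<le> n \<and> close w s"
    and prefixes: "\<And>s s' j. s \<in> P \<Longrightarrow> s' \<in> P \<Longrightarrow> j \<le> length s \<Longrightarrow> j \<le> length s' \<Longrightarrow>
      vt (take j s) = vt (take j s') \<Longrightarrow> take j s = take j s'"
  shows "prefix_tree n r0 delta C w eps (\<Union>s\<in>P. path_edges r0 delta s)"
  unfolding prefix_tree_def
proof (intro exI conjI ballI impI)
  fix s assume "s \<in> P"
  then show "1 \<le> length s" "length s \<le> n"
    and "sfx_dist (code_str r0 delta C s) (take (length s) w) < 1 - eps"
    using paths[of s] close_iff_sfx_dist assms(1) by (auto simp: Suc_le_eq)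
next
  fix e e' assume "e \<in> (\<Union>s\<in>P. path_edges r0 delta s)" "e' \<in> (\<Union>s\<in>P. path_edges r0 delta s)"
    and "delta (fst e) (snd e) = delta (fst e') (snd e')"
  moreover have "length s \<le> n" if "s \<in> P" for s
    using paths[OF that] by simp
  ultimately show "e = e'"
    using prefixes by (intro path_edges_in_edge_unique[where P = P]) simp_all
qed simp

section \<open>Ambiguous depths and sensitivity\<close>

definition ambiguous_depths :: "'b list \<Rightarrow> nat set" where
  "ambiguous_depths w =
     {i \<in> {1..n}. \<exists>p p'. length p = i \<and> length p' = i \<and> close w p \<and> close w p' \<and> vt p \<noteq> vt p'}"

lemma card_ambiguous_depths_eq_sum:
  "card (ambiguous_depths w) = (\<Sum>j<n. of_bool (Suc j \<in> ambiguous_depths w))"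
proof -
  have "ambiguous_depths w = Suc ` ({..<n} \<inter> {j. Suc j \<in> ambiguous_depths w})"
  proof (intro set_eqI iffI)
    fix i assume "i \<in> ambiguous_depths w"
    moreover from this have "1 \<le> i" "i \<le> n"
      by (simp_all add: ambiguous_depths_def)
    ultimately show "i \<in> Suc ` ({..<n} \<inter> {j. Suc j \<in> ambiguous_depths w})"
      by (intro image_eqI[of _ _ "i - 1"]) auto
  qed (auto simp: ambiguous_depths_def)
  then have "card (ambiguous_depths w) = card (Suc ` ({..<n} \<inter> {j. Suc j \<in> ambiguous_depths w}))"
    by (rule arg_cong)
  also have "\<dots> = card ({..<n} \<inter> {j. Suc j \<in> ambiguous_depths w})"
    by (rule card_image) simp
  finally show ?thesis
    by simp
qed

definition canonical_close_paths :: "'b list \<Rightarrow> 'a list set" where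
  "canonical_close_paths w = {canonical w p | p. p \<noteq> [] \<and> length p \<le> n \<and> close w p}"

definition longest_close_path :: "'b list \<Rightarrow> 'a list \<Rightarrow> bool" where
  "longest_close_path w pm \<longleftrightarrow> pm \<noteq> [] \<and> length pm \<le> n \<and> close w pm \<and>
     (\<forall>p. p \<noteq> [] \<and> length p \<le> n \<and> close w p \<longrightarrow> length p \<le> length pm)"

text \<open>The prefix tree behind the ambiguity bound: all canonical close paths, plus the canonical
  path of a longest one padded to depth n. The patched word keeps their agreements with w and
  makes the padding agree wherever none of them does.\<close>

definition padded :: "'b list \<Rightarrow> 'a list \<Rightarrow> 'a list" where
  "padded w pm = canonical w pm @ replicate (n - length pm) undefined"

definition tree_paths :: "'b list \<Rightarrow> 'a list \<Rightarrow> 'a list set" where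
  "tree_paths w pm = insert (padded w pm) (canonical_close_paths w)"

definition tree_word :: "'b list \<Rightarrow> 'a list \<Rightarrow> 'b list" where
  "tree_word w pm = patch (canonical_close_paths w) w (padded w pm)"

lemma finite_tree_paths: "finite (tree_paths w pm)"
proof -
  have "canonical_close_paths w \<subseteq> (canonical w) ` {p. set p \<subseteq> UNIV \<and> length p \<le> n}"
    unfolding canonical_close_paths_def by auto
  then show ?thesis
    using finite_lists_length_le[of "UNIV :: 'a set" n] by (simp add: tree_paths_def finite_subset)
qed

lemma canonical_close_pathsE:
  assumes "q \<in> canonical_close_paths w"
  obtains p where "p \<noteq> [] \<and> length p \<le> n \<and> close w p" "q = canonical w p" "length q = length p" "close w q"
proof -
  from assms obtain p where p: "p \<noteq> []" "length p \<le> n" "close w p" "q = canonical w p"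
    unfolding canonical_close_paths_def by blast
  moreover have "length q = length p"
    using p(4) best_path_reaches[of "score w" p] by simp
  ultimately show thesis
    using that close_canonical by blast
qed

lemma longest_close_path_exists:
  assumes "\<exists>p. p \<noteq> [] \<and> length p \<le> n \<and> close w p"
  shows "\<exists>pm. longest_close_path w pm"
proof -
  obtain p where "p \<noteq> [] \<and> length p \<le> n \<and> close w p"
    using assms by blast
  then show ?thesis
    using ex_has_greatest_nat[of "\<lambda>p. p \<noteq> [] \<and> length p \<le> n \<and> close w p" p length "Suc n"]
    unfolding longest_close_path_def by auto
qed

lemma length_padded: "longest_close_path w pm \<Longrightarrow> length (padded w pm) = n"
  using best_path_reaches[of "score w" pm] by (simp add: longest_close_path_def padded_def)

lemma canonical_longest_close_path:
  "longest_close_path w pm \<Longrightarrow> canonical w pm \<in> canonical_close_paths w"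
  unfolding longest_close_path_def canonical_close_paths_def by blast

lemma canonical_close_path_le_longest:
  assumes "longest_close_path w pm" "q \<in> canonical_close_paths w"
  shows "length q \<le> length pm"
proof -
  obtain p where "p \<noteq> [] \<and> length p \<le> n \<and> close w p" "length q = length p"
    using assms(2) by (rule canonical_close_pathsE)
  then show ?thesis
    using assms(1) unfolding longest_close_path_def by simp
qed

lemma tree_paths_close:
  assumes pm: "longest_close_path w pm" and s: "s \<in> tree_paths w pm"
  shows "s \<noteq> [] \<and> length s \<le> n \<and> close (tree_word w pm) s"
proof (cases "s = padded w pm")
  case True
  have "close w (canonical w pm)"
    using pm close_canonical by (simp add: longest_close_path_def)
  then have "close (tree_word w pm) (padded w pm)"
    unfolding tree_word_def padded_def
    using close_patch_extension canonical_longest_close_path[OF pm] canonical_close_path_le_longest[OF pm]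
      best_path_reaches[of "score w" pm] by simp
  then show ?thesis
    using True length_padded[OF pm] pm by (auto simp: longest_close_path_def padded_def)
next
  case False
  then have "s \<in> canonical_close_paths w"
    using s by (simp add: tree_paths_def)
  moreover from this obtain p where "p \<noteq> [] \<and> length p \<le> n \<and> close w p" "length s = length p" "close w s"
    by (rule canonical_close_pathsE)
  ultimately show ?thesis
    using close_patch[of s _ "padded w pm" w] length_padded[OF pm] by (auto simp: tree_word_def)
qed

lemma tree_paths_prefixes:
  assumes "longest_close_path w pm" "s \<in> tree_paths w pm" "s' \<in> tree_paths w pm"
    and "j \<le> length s" "j \<le> length s'" "vt (take j s) = vt (take j s')"
  shows "take j s = take j s'"
proof (rule best_path_extension_prefixes[where Q = "canonical_close_paths w"])
  fix q assume q: "q \<in> canonical_close_paths w"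
  then obtain p where "q = canonical w p" "length q = length p"
    by (rule canonical_close_pathsE)
  then show "\<exists>p. length p \<le> length pm \<and> q = canonical w p"
    using canonical_close_path_le_longest[OF assms(1) q] by auto
qed (use assms in \<open>simp_all add: tree_paths_def padded_def\<close>)

lemma prefix_tree_tree_paths:
  "longest_close_path w pm \<Longrightarrow>
     prefix_tree n r0 delta C (tree_word w pm) eps (\<Union>s\<in>tree_paths w pm. path_edges r0 delta s)"
  using tree_paths_close tree_paths_prefixes length_padded
  by (intro prefix_tree_of_close_paths) (simp_all add: tree_word_def)

lemma agreeing_edges_tree_paths_nonempty:
  assumes pm: "longest_close_path w pm" and "j < n"
  shows "agreeing_edges (tree_word w pm) (tree_paths w pm) j \<noteq> {}"
proof -
  have len: "length (padded w pm) = n"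
    using length_padded[OF pm] .
  obtain s where "s \<in> tree_paths w pm" "j < length s" "agrees (tree_word w pm) s j"
  proof (cases "\<exists>q\<in>canonical_close_paths w. j < length q \<and> agrees w q j")
    case True
    then obtain q where "q \<in> canonical_close_paths w" "j < length q" "agrees w q j"
      by blast
    then show thesis
      using that[of q] agrees_patch[of q _ j "padded w pm" w] len assms(2)
      by (simp add: tree_paths_def tree_word_def)
  next
    case False
    then show thesis
      using that[of "padded w pm"] agrees_patch_filler[of j "padded w pm" _ w] len assms(2)
      by (simp add: tree_paths_def tree_word_def)
  qed
  then show ?thesis
    unfolding agreeing_edges_def by blast
qed

lemma canonical_agrees_tree_word:
  assumes pm: "longest_close_path w pm" and p: "p \<noteq> []" "length p \<le> n" "close w p"
  shows "canonical w p \<in> tree_paths w pm" "agrees (tree_word w pm) (canonical w p) (length p - 1)"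
proof -
  have "canonical w p \<in> canonical_close_paths w"
    using p unfolding canonical_close_paths_def by blast
  moreover have "length (canonical w p) = length p"
    using best_path_reaches[of "score w" p] by simp
  moreover have "agrees w (canonical w p) (length p - 1)"
    using close_agrees_last[OF close_canonical[OF p(1,3)]] p(1) calculation(2) by (metis length_0_conv)
  moreover have "length p - 1 < length p" "length p - 1 < n"
    using p(1,2) by (cases p; simp)+
  ultimately show "canonical w p \<in> tree_paths w pm" "agrees (tree_word w pm) (canonical w p) (length p - 1)"
    using agrees_patch[of "canonical w p" _ "length p - 1" "padded w pm" w] length_padded[OF pm]
    by (simp_all add: tree_word_def tree_paths_def)
qed

lemma ambiguous_depth_two_agreeing_edges:
  assumes pm: "longest_close_path w pm" and amb: "Suc j \<in> ambiguous_depths w"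
  shows "2 \<le> card (agreeing_edges (tree_word w pm) (tree_paths w pm) j)"
proof -
  obtain p p' where p: "length p = Suc j" "length p' = Suc j" "close w p" "close w p'" "vt p \<noteq> vt p'"
    and "Suc j \<le> n"
    using amb unfolding ambiguous_depths_def by auto
  moreover from p have "p \<noteq> []" "p' \<noteq> []"
    by auto
  ultimately have "canonical w p \<in> tree_paths w pm" "agrees (tree_word w pm) (canonical w p) j"
    "canonical w p' \<in> tree_paths w pm" "agrees (tree_word w pm) (canonical w p') j"
    using canonical_agrees_tree_word[OF pm, of p] canonical_agrees_tree_word[OF pm, of p'] by auto
  moreover have "length (canonical w p) = Suc j" "vt (canonical w p) = vt p"
    "length (canonical w p') = Suc j" "vt (canonical w p') = vt p'"
    using best_path_reaches[of "score w" p] best_path_reaches[of "score w" p'] p(1,2) by simp_all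
  ultimately show ?thesis
    using p(5) finite_tree_paths
    by (intro two_le_card_agreeing_edges[where s = "canonical w p" and s' = "canonical w p'"]) simp_all
qed

lemma card_agreeing_edges_tree_paths_ge:
  assumes pm: "longest_close_path w pm" and "j < n"
  shows "1 + of_bool (Suc j \<in> ambiguous_depths w) \<le> card (agreeing_edges (tree_word w pm) (tree_paths w pm) j)"
proof (cases "Suc j \<in> ambiguous_depths w")
  case True
  then show ?thesis
    using ambiguous_depth_two_agreeing_edges[OF pm True] by simp
next
  case False
  have "0 < card (agreeing_edges (tree_word w pm) (tree_paths w pm) j)"
    using agreeing_edges_tree_paths_nonempty[OF assms] finite_agreeing_edges[OF finite_tree_paths]
    by (simp add: card_gt_0_iff)
  then show ?thesis
    using False by simp
qed

lemma card_ambiguous_depths_le: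
  assumes sens: "sensitive eps n layer r0 delta C" and w: "length w = n"
  shows "real (card (ambiguous_depths w)) \<le> eps * real n"
proof (cases "\<exists>p. p \<noteq> [] \<and> length p \<le> n \<and> close w p")
  case False
  have "ambiguous_depths w = {}"
  proof (rule ccontr)
    assume "ambiguous_depths w \<noteq> {}"
    then obtain i p where "i \<in> {1..n}" "length p = i" "close w p"
      unfolding ambiguous_depths_def by blast
    with False show False
      by auto
  qed
  then show ?thesis
    using eps_pos by simp
next
  case True
  then obtain pm where pm: "longest_close_path w pm"
    using longest_close_path_exists by blast
  let ?P = "tree_paths w pm" and ?w' = "tree_word w pm"
  have "n + card (ambiguous_depths w) = (\<Sum>j<n. 1 + of_bool (Suc j \<in> ambiguous_depths w))"
    by (simp only: card_ambiguous_depths_eq_sum sum.distrib) simp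
  also have "\<dots> \<le> (\<Sum>j<n. card (agreeing_edges ?w' ?P j))"
    using card_agreeing_edges_tree_paths_ge[OF pm] by (intro sum_mono) simp
  also have "\<dots> \<le> agr layer C ?w' (\<Union>s\<in>?P. path_edges r0 delta s)"
    using tree_paths_close[OF pm] by (intro sum_card_agreeing_edges_le_agr[OF finite_tree_paths]) simp
  finally have "real (n + card (ambiguous_depths w)) \<le> real (agr layer C ?w' (\<Union>s\<in>?P. path_edges r0 delta s))"
    by (rule of_nat_mono)
  also have "\<dots> \<le> (1 + eps) * real n"
  proof -
    have "length ?w' = n"
      using length_padded[OF pm] by (simp add: tree_word_def)
    then show ?thesis
      using sens prefix_tree_tree_paths[OF pm] unfolding sensitive_def by blast
  qed
  finally show ?thesis
    by (simp add: algebra_simps)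
qed

section \<open>Decoding failures\<close>

lemma CDec_take_eq_Some:
  assumes "i \<le> length w" and "{vt p | p. length p = i \<and> close w p} = {v}"
  shows "CDec eps r0 delta C (take i w) = Some v"
proof -
  have "sfx_dist (code_str r0 delta C p) (take i w) < 1 - eps \<longleftrightarrow> close w p" if "length p = i" for p
    using close_iff_sfx_dist[of p w] that assms(1) by simp
  moreover have "length (take i w) = i"
    using assms(1) by simp
  ultimately have "{vt p | p. length p = length (take i w) \<and> sfx_dist (code_str r0 delta C p) (take i w) < 1 - eps}
      = {vt p | p. length p = i \<and> close w p}"
    by auto
  then have "{vt p | p. length p = length (take i w) \<and> sfx_dist (code_str r0 delta C p) (take i w) < 1 - eps} = {v}"
    using assms(2) by simp
  then show ?thesis
    unfolding CDec_def by simp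
qed

lemma decoding_failures_subset:
  assumes "length x = n" "length w = n"
  shows "{i \<in> {i \<in> {1..n}. code_str r0 delta C x ! (i - 1) = w ! (i - 1)}.
            CDec eps r0 delta C (take i w) \<noteq> Some (vt (take i x))}
      \<subseteq> {i \<in> {1..n}. agrees w x (i - 1) \<and> \<not> suffix_dense eps (agrees w x) i} \<union> ambiguous_depths w"
proof
  fix i assume "i \<in> {i \<in> {i \<in> {1..n}. code_str r0 delta C x ! (i - 1) = w ! (i - 1)}.
            CDec eps r0 delta C (take i w) \<noteq> Some (vt (take i x))}"
  then have i: "1 \<le> i" "i \<le> n" "agrees w x (i - 1)" and fails: "CDec eps r0 delta C (take i w) \<noteq> Some (vt (take i x))"
    using assms(1) by (auto simp: nth_code_str agrees_def)
  show "i \<in> {i \<in> {1..n}. agrees w x (i - 1) \<and> \<not> suffix_dense eps (agrees w x) i} \<union> ambiguous_depths w"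
  proof (rule ccontr)
    assume "\<not> ?thesis"
    then have "close w (take i x)" "i \<notin> ambiguous_depths w"
      using i assms(1) close_take_iff[of i x w] by auto
    have "length (take i x) = i"
      using i(2) assms(1) by simp
    have "vt p = vt (take i x)" if "length p = i" "close w p" for p
    proof (rule ccontr)
      assume "vt p \<noteq> vt (take i x)"
      then have "\<exists>p p'. length p = i \<and> length p' = i \<and> close w p \<and> close w p' \<and> vt p \<noteq> vt p'"
        using that \<open>close w (take i x)\<close> \<open>length (take i x) = i\<close> by blast
      then have "i \<in> ambiguous_depths w"
        using i(1,2) unfolding ambiguous_depths_def by simp
      with \<open>i \<notin> ambiguous_depths w\<close> show False ..
    qed
    then have "{vt p | p. length p = i \<and> close w p} = {vt (take i x)}"
      using \<open>close w (take i x)\<close> \<open>length (take i x) = i\<close> by blast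
    then show False
      using CDec_take_eq_Some[of i w] fails i(2) assms(2) by simp
  qed
qed

lemma card_decoding_failures_le:
  assumes "sensitive eps n layer r0 delta C" "length x = n" "length w = n"
  shows "real (card {i \<in> {i \<in> {1..n}. code_str r0 delta C x ! (i - 1) = w ! (i - 1)}.
                 CDec eps r0 delta C (take i w) \<noteq> Some (vt (take i x))}) \<le> 2 * eps * real n"
    (is "real (card ?B) \<le> _")
proof -
  let ?F = "{i \<in> {1..n}. agrees w x (i - 1) \<and> \<not> suffix_dense eps (agrees w x) i}"
  have "finite (ambiguous_depths w)"
    by (simp add: ambiguous_depths_def)
  then have "card ?B \<le> card (?F \<union> ambiguous_depths w)"
    using decoding_failures_subset[OF assms(2,3)] by (intro card_mono) simp_all
  also have "\<dots> \<le> card ?F + card (ambiguous_depths w)"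
    by (rule card_Un_le)
  finally have "real (card ?B) \<le> real (card ?F) + real (card (ambiguous_depths w))"
    by (simp only: of_nat_add[symmetric] of_nat_le_iff)
  then show ?thesis
    using card_agreeing_not_dense_le[of eps n "agrees w x"] card_ambiguous_depths_le[OF assms(1,3)] eps_pos
    by linarith
qed

end

theorem theorem5p11:
  fixes eps :: real and n :: nat
    and V :: "'v set" and layer :: "'v \<Rightarrow> nat" and r0 :: 'v
    and delta :: "'v \<Rightarrow> 'a::finite \<Rightarrow> 'v"
    and C :: "'v \<Rightarrow> 'a \<Rightarrow> 'b::finite"
    and x :: "'a list" and w :: "'b list"
  assumes "0 < eps"
    and "layered_graph n V layer r0 delta"
    and "sensitive eps n layer r0 delta C"
    and "length x = n" and "length w = n"
  shows "real (card {i \<in> {i \<in> {1..n}. code_str r0 delta C x ! (i - 1) = w ! (i - 1)}.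
                 CDec eps r0 delta C (take i w) \<noteq> Some (vtx r0 delta (take i x))})
           \<le> 2 * eps * real n"
proof (cases "eps < 1")
  case True
  interpret layered_code r0 delta n V layer C eps
    using assms True by unfold_locales auto
  show ?thesis
    using card_decoding_failures_le[OF assms(3-5)] .
next
  case False
  have "real (card {i \<in> {i \<in> {1..n}. P i}. Q i}) \<le> real n" for P Q :: "nat \<Rightarrow> bool"
    using card_mono[of "{1..n}" "{i \<in> {i \<in> {1..n}. P i}. Q i}"] by force
  moreover have "real n \<le> 2 * eps * real n"
    using False mult_right_mono[of 1 "2 * eps" "real n"] by simp
  ultimately show ?thesis
    by (meson order_trans)
qed

end
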